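(* Let $M,N\ge1$ be integers and let $\sigma$ be a nonempty set of (distinct) functions $\mathbb{Z}_M\to\mathbb{Z}_N$ that is totally indistinguishable. Then $\sigma$ has cardinality at least $4$.
   Context: A set $\sigma$ of functions $\mathbb{Z}_M\to\mathbb{Z}_N$ is totally indistinguishable if for every $x\in\mathbb{Z}_M$ and every $f\in\sigma$ there exists $f'\in\sigma$ with $f'\neq f$ and $f'(x)=f(x)$. *)

theory Defs
  imports Main "HOL-Library.FuncSet"
begin

text \<open>Z_M is modelled as the carrier {0..<M} of natural numbers; a function Z_M to Z_N
  is an extensional function in PiE {0..<M} (%_. {0..<N}).\<close>

definition totally_indistinguishable :: "nat \<Rightarrow> (nat \<Rightarrow> nat) set \<Rightarrow> bool" where
  "totally_indistinguishable M \<sigma> \<longleftrightarrow>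
     (\<forall>x\<in>{0..<M}. \<forall>f\<in>\<sigma>. \<exists>f'\<in>\<sigma>. f' \<noteq> f \<and> f' x = f x)"

end

theory Submission
  imports Defs
begin

text \<open>Two members of \<sigma> are distinct, so they differ at some point x. Each of the two
  different values at x is taken by a second member of \<sigma>, which gives four distinct members.\<close>

lemma card_ge_4_if_values_shared_at:
  assumes "finite \<sigma>" "f \<in> \<sigma>" "g \<in> \<sigma>" "f x \<noteq> g x"
    and shared: "\<And>\<phi>. \<phi> \<in> \<sigma> \<Longrightarrow> \<exists>\<phi>'\<in>\<sigma>. \<phi>' \<noteq> \<phi> \<and> \<phi>' x = \<phi> x"
  shows "4 \<le> card \<sigma>"
proof -
  obtain h where h: "h \<in> \<sigma>" "h \<noteq> f" "h x = f x" using shared \<open>f \<in> \<sigma>\<close> by blast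
  obtain k where k: "k \<in> \<sigma>" "k \<noteq> g" "k x = g x" using shared \<open>g \<in> \<sigma>\<close> by blast
  have "f \<noteq> g" "f \<noteq> k" "h \<noteq> g" "h \<noteq> k"
    using h(3) k(3) \<open>f x \<noteq> g x\<close> by auto
  then have "card {f, g, h, k} = 4"
    using h(2) k(2) by auto
  moreover have "{f, g, h, k} \<subseteq> \<sigma>"
    using h k assms(2,3) by auto
  ultimately show ?thesis
    using card_mono[OF \<open>finite \<sigma>\<close>] by metis
qed

theorem lemma2:
  fixes M N :: nat and \<sigma> :: "(nat \<Rightarrow> nat) set"
  assumes "M \<ge> 1" and "N \<ge> 1"
    and "\<sigma> \<subseteq> {0..<M} \<rightarrow>\<^sub>E {0..<N}"
    and "\<sigma> \<noteq> {}"
    and "totally_indistinguishable M \<sigma>"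
  shows "card \<sigma> \<ge> 4"
proof -
  have shared: "\<exists>\<phi>'\<in>\<sigma>. \<phi>' \<noteq> \<phi> \<and> \<phi>' x = \<phi> x" if "x \<in> {0..<M}" "\<phi> \<in> \<sigma>" for x \<phi>
    using assms(5) that unfolding totally_indistinguishable_def by blast
  obtain f where f: "f \<in> \<sigma>" using assms(4) by blast
  then obtain g where g: "g \<in> \<sigma>" "g \<noteq> f"
    using shared[of 0] \<open>M \<ge> 1\<close> by auto
  have "f \<in> extensional {0..<M}" "g \<in> extensional {0..<M}"
    using f g assms(3) by (auto simp: PiE_def)
  then obtain x where x: "x \<in> {0..<M}" "f x \<noteq> g x"
    using extensionalityI g(2) by metis
  have "finite \<sigma>"
    using assms(3) by (rule finite_subset) (simp add: finite_PiE)
  then show ?thesis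
    using card_ge_4_if_values_shared_at[OF _ f g(1) x(2)] shared[OF x(1)] by blast
qed

end
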